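(* Let $\Omega\subset\mathbb H^n$ be an open, horizontally bounded set, $G_0\subset\Omega$ an open (Euclidean) convex set, $\xi_0\in G_0$, and $c_v<c_b\le0$. Let $V:\mathbb R^{2n+1}\to\mathbb R$ be the slicing cone with vertex $(\xi_0,c_v)$ and base $G_0\cap H_{\xi_0}$ with value $c_b$ on $\partial G_0\cap H_{\xi_0}$ (defined in the context). Then: (i) $B_{\mathbb R^{2n}}(0,r_0)\subset\partial_HV(\xi_0)$, where $r_0=\dfrac{c_b-c_v}{\mathrm{diam}_H(G_0\cap H_{\xi_0})}$; (ii) for every $p$ in the interior of $\partial_HV(\xi_0)$, $$V(\xi)>V(\xi_0)+p\cdot(\mathrm{Pr}_1(\xi)-\mathrm{Pr}_1(\xi_0))\qquad\forall\xi\in(\overline{G_0}\cap H_{\xi_0})\setminus\{\xi_0\}.$$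
   Context: $\mathbb H^n=\mathbb C^n\times\mathbb R\cong\mathbb R^{2n+1}$ with real coordinates $(x,y,t)$, $z=x+iy$, group law $(z,t)\circ(z',t')=(z+z',t+t'+2\,\mathrm{Im}\langle z,z'\rangle)$, $\langle z,z'\rangle=\sum_j z_j\overline{z'_j}$. Dilations $\delta_\lambda(z,t)=(\lambda z,\lambda^2t)$. Horizontal plane at $\xi_0=(x_0,y_0,t_0)$: $H_{\xi_0}=\{(x,y,t):t=t_0+2(x\cdot y_0-x_0\cdot y)\}$ (an affine hyperplane of $\mathbb R^{2n+1}$). $\mathrm{Pr}_1(x,y,t)=(x,y)$. Gauge $N(z,t)=(|z|^4+t^2)^{1/4}$, $d_H(\xi,\zeta)=N(\zeta^{-1}\circ\xi)$, $\mathrm{diam}_H$ the $d_H$-diameter; $\Omega$ horizontally bounded means $\sup\{\mathrm{diam}_H(\Omega\cap H_\xi):\xi\in\Omega\}<\infty$. Slicing cone: for $\eta\in H_{\xi_0}\setminus\{\xi_0\}$ let $\eta^\partial$ be the unique point of $\partial G_0\cap H_{\xi_0}$ on the horizontal ray $\{\xi_0\circ\delta_s(\xi_0^{-1}\circ\eta):s>0\}$, and let $\lambda^\eta=N(\xi_0^{-1}\circ\eta)/N(\xi_0^{-1}\circ\eta^\partial)$ (so $\eta=\xi_0\circ\delta_{\lambda^\eta}(\xi_0^{-1}\circ\eta^\partial)$); set $\lambda^{\xi_0}=0$. For $\xi\in\mathbb R^{2n+1}$ let $\xi^\perp$ be the Euclidean orthogonal projection of $\xi$ onto $H_{\xi_0}$,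 and define $V(\xi)=c_v\bigl(1-(1-\tfrac{c_b}{c_v})\lambda^{\xi^\perp}\bigr)$. Horizontal subdifferential of $V$ (restricted to $\Omega$) at $\xi_0$: $\partial_HV(\xi_0)=\{p\in\mathbb R^{2n}:V(\xi)\ge V(\xi_0)+p\cdot(\mathrm{Pr}_1(\xi)-\mathrm{Pr}_1(\xi_0))\ \forall\xi\in\Omega\cap H_{\xi_0}\}$. *)

theory Defs
  imports "HOL-Analysis.Analysis"
begin

text \<open>Points of the Heisenberg group H^n = C^n x R, written in real coordinates
  (x, y, t) with x, y in R^n; the dimension n is the cardinality of the finite type 'n.\<close>

type_synonym 'n heis = "(real^'n) \<times> (real^'n) \<times> real"

definition hmult :: "'n::finite heis \<Rightarrow> 'n heis \<Rightarrow> 'n heis" (infixl "\<circ>\<^sub>H" 70) where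
  "hmult p q = (case p of (x, y, t) \<Rightarrow> case q of (x', y', t') \<Rightarrow>
      (x + x', y + y', t + t' + 2 * (y \<bullet> x' - x \<bullet> y')))"
  \<comment> \<open>2 Im<z,z'> = 2 (y.x' - x.y') for z = x + iy, z' = x' + iy'\<close>

definition hinv :: "'n::finite heis \<Rightarrow> 'n heis" where
  "hinv p = (case p of (x, y, t) \<Rightarrow> (- x, - y, - t))"

definition hdil :: "real \<Rightarrow> 'n::finite heis \<Rightarrow> 'n heis" where
  "hdil s p = (case p of (x, y, t) \<Rightarrow> (s *\<^sub>R x, s *\<^sub>R y, s\<^sup>2 * t))"

definition gauge :: "'n::finite heis \<Rightarrow> real" where
  "gauge p = (case p of (x, y, t) \<Rightarrow> ((norm x)\<^sup>2 + (norm y)\<^sup>2)\<^sup>2 + t\<^sup>2) powr (1/4)"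

definition dH :: "'n::finite heis \<Rightarrow> 'n heis \<Rightarrow> real" where
  "dH \<xi> \<zeta> = gauge (hinv \<zeta> \<circ>\<^sub>H \<xi>)"

definition diamH :: "'n::finite heis set \<Rightarrow> real" where
  "diamH S = Sup {dH a b | a b. a \<in> S \<and> b \<in> S}"

definition hplane :: "'n::finite heis \<Rightarrow> 'n heis set" where
  "hplane \<xi>0 = {(x, y, t). t = snd (snd \<xi>0) + 2 * (x \<bullet> fst (snd \<xi>0) - fst \<xi>0 \<bullet> y)}"

definition Pr1 :: "'n::finite heis \<Rightarrow> (real^'n) \<times> (real^'n)" where
  "Pr1 p = (fst p, fst (snd p))"

definition horizontally_bounded :: "'n::finite heis set \<Rightarrow> bool" where
  "horizontally_bounded \<Omega> \<longleftrightarrow>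
     (\<exists>B. \<forall>\<xi>\<in>\<Omega>. \<forall>a\<in>\<Omega> \<inter> hplane \<xi>. \<forall>b\<in>\<Omega> \<inter> hplane \<xi>. dH a b \<le> B)"

definition bdry_pt :: "'n::finite heis set \<Rightarrow> 'n heis \<Rightarrow> 'n heis \<Rightarrow> 'n heis" where
  "bdry_pt G0 \<xi>0 \<eta> = (THE e. e \<in> frontier G0 \<inter> hplane \<xi>0 \<and>
      (\<exists>s>0. e = \<xi>0 \<circ>\<^sub>H hdil s (hinv \<xi>0 \<circ>\<^sub>H \<eta>)))"

definition slice_lambda :: "'n::finite heis set \<Rightarrow> 'n heis \<Rightarrow> 'n heis \<Rightarrow> real" where
  "slice_lambda G0 \<xi>0 \<eta> = (if \<eta> = \<xi>0 then 0
      else gauge (hinv \<xi>0 \<circ>\<^sub>H \<eta>) / gauge (hinv \<xi>0 \<circ>\<^sub>H bdry_pt G0 \<xi>0 \<eta>))"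

definition slicing_cone ::
  "'n::finite heis set \<Rightarrow> 'n heis \<Rightarrow> real \<Rightarrow> real \<Rightarrow> 'n heis \<Rightarrow> real" where
  "slicing_cone G0 \<xi>0 cv cb \<xi> =
     cv * (1 - (1 - cb / cv) * slice_lambda G0 \<xi>0 (closest_point (hplane \<xi>0) \<xi>))"

definition horiz_subdiff ::
  "'n::finite heis set \<Rightarrow> ('n heis \<Rightarrow> real) \<Rightarrow> 'n heis \<Rightarrow> ((real^'n) \<times> (real^'n)) set" where
  "horiz_subdiff \<Omega> V \<xi>0 = {p. \<forall>\<xi>\<in>\<Omega> \<inter> hplane \<xi>0.
      V \<xi> \<ge> V \<xi>0 + p \<bullet> (Pr1 \<xi> - Pr1 \<xi>0)}"

end

theory Submission
  imports Defs
begin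

text \<open>On the horizontal plane H through \<xi>0 the Heisenberg rays from \<xi>0 are Euclidean rays,
  and the gauge of \<xi>0\<inverse>\<eta> is the Euclidean length of w = Pr1 \<eta> - Pr1 \<xi>0. Hence on H the
  function \<lambda> is the Minkowski gauge of the convex slice G0 \<inter> H centred at \<xi>0: it equals 1/\<tau>
  for the exit time \<tau> of the ray through \<eta>, it is positively homogeneous, and it is at least
  |w| / diamH (G0 \<inter> H). There the cone equals cv + (cb - cv) \<lambda>, so (i) is Cauchy-Schwarz.
  For (ii), if p is interior then p + \<epsilon> w/|w| is still a subgradient; testing it at a point
  of the ray through \<xi> lying in G0 and using the homogeneity of \<lambda> gives the strict
  inequality at \<xi>.\<close>

lemma open_convex_frontier_ray_unique:
  fixes G :: "'a::euclidean_space set"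
  assumes G: "open G" "convex G" "a \<in> G"
    and "0 < s" "0 < t" "a + s *\<^sub>R d \<in> frontier G" "a + t *\<^sub>R d \<in> frontier G"
  shows "s = t"
proof -
  have not_less: "\<not> s < t" if "0 < s" "a + s *\<^sub>R d \<in> frontier G" "a + t *\<^sub>R d \<in> frontier G"
    for s t
  proof
    assume "s < t"
    have "a + t *\<^sub>R d \<noteq> a" using that(3) G by (auto simp: frontier_def interior_open)
    moreover have "a + s *\<^sub>R d = (1 - s/t) *\<^sub>R a + (s/t) *\<^sub>R (a + t *\<^sub>R d)"
      using \<open>s < t\<close> that(1) by (simp add: algebra_simps)
    ultimately have "a + s *\<^sub>R d \<in> open_segment a (a + t *\<^sub>R d)"
      using \<open>s < t\<close> that(1) unfolding in_segment by (intro conjI exI[of _ "s/t"]) auto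
    also have "\<dots> \<subseteq> G"
      using in_interior_closure_convex_segment[of G a "a + t *\<^sub>R d"] G that(3)
      by (simp add: interior_open frontier_def)
    finally show False using that(2) G(1) by (simp add: frontier_def interior_open)
  qed
  show ?thesis using not_less[of s t] not_less[of t s] assms by linarith
qed

lemma bounded_ray_exit:
  fixes G :: "'a::euclidean_space set"
  assumes G: "open G" "a \<in> G" and bnd: "bounded {s. a + s *\<^sub>R d \<in> G}"
  obtains \<tau> where "0 < \<tau>" "\<And>s. 0 \<le> s \<Longrightarrow> s < \<tau> \<Longrightarrow> a + s *\<^sub>R d \<in> G"
    "a + \<tau> *\<^sub>R d \<in> frontier G"
proof -
  define f where "f s = a + s *\<^sub>R d" for s :: real
  define S where "S = f -` G"
  have contf: "continuous_on UNIV f" unfolding f_def by (intro continuous_intros)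
  have "open S" unfolding S_def using G(1) contf by (simp add: open_vimage)
  moreover have "0 \<in> S" using G(2) by (simp add: S_def f_def)
  moreover have "bounded S" using bnd by (simp add: S_def f_def vimage_def)
  ultimately obtain \<tau> where \<tau>: "0 < \<tau>" "\<tau> \<in> frontier S"
    "\<And>s. 0 \<le> s \<Longrightarrow> s < \<tau> \<Longrightarrow> s \<in> interior S"
    using ray_to_frontier[of S 0 1] by (auto simp: interior_open)
  have "f ` closure S \<subseteq> closure G"
    by (rule image_closure_subset) (auto simp: S_def intro: continuous_on_subset[OF contf]
        closure_subset[THEN subsetD])
  then have "f \<tau> \<in> closure G - G"
    using \<tau>(2) \<open>open S\<close> by (auto simp: frontier_def interior_open S_def)
  then show ?thesis
    using that[OF \<tau>(1)] \<tau>(3) \<open>open S\<close> G(1)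
    by (auto simp: frontier_def interior_open S_def f_def)
qed

lemma hinv_hmult_hplane:
  assumes "\<eta> \<in> hplane \<xi>0"
  shows "hinv \<xi>0 \<circ>\<^sub>H \<eta> = (fst \<eta> - fst \<xi>0, fst (snd \<eta>) - fst (snd \<xi>0), 0)"
  using assms
  by (cases \<eta>; cases \<xi>0) (auto simp: hplane_def hinv_def hmult_def inner_commute algebra_simps)

lemma gauge_horizontal: "gauge (a, b, 0) = norm (a, b)"
proof -
  have "gauge (a, b, 0) = (((norm a)\<^sup>2 + (norm b)\<^sup>2)\<^sup>2) powr (1/4)" by (simp add: gauge_def)
  also have "\<dots> = ((norm a)\<^sup>2 + (norm b)\<^sup>2) powr (2 * (1/4))"
    by (subst powr_powr[symmetric]) (simp add: powr_realpow)
  finally show ?thesis by (simp add: norm_prod_def powr_half_sqrt)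
qed

lemma gauge_hinv_hmult_hplane:
  assumes "\<eta> \<in> hplane \<xi>0"
  shows "gauge (hinv \<xi>0 \<circ>\<^sub>H \<eta>) = norm (Pr1 \<eta> - Pr1 \<xi>0)"
  using assms by (simp add: hinv_hmult_hplane gauge_horizontal Pr1_def)

lemma dH_hplane:
  assumes "\<eta> \<in> hplane \<xi>0"
  shows "dH \<eta> \<xi>0 = norm (Pr1 \<eta> - Pr1 \<xi>0)"
  using assms by (simp add: dH_def gauge_hinv_hmult_hplane)

lemma hmult_hdil_hplane:
  assumes "\<eta> \<in> hplane \<xi>0"
  shows "\<xi>0 \<circ>\<^sub>H hdil s (hinv \<xi>0 \<circ>\<^sub>H \<eta>) = \<xi>0 + s *\<^sub>R (\<eta> - \<xi>0)"
proof -
  obtain a b c a0 b0 c0 where "\<eta> = (a, b, c)" "\<xi>0 = (a0, b0, c0)"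
    by (cases \<eta>; cases \<xi>0) auto
  moreover from assms calculation have "c = c0 + 2 * (a \<bullet> b0 - a0 \<bullet> b)"
    by (simp add: hplane_def)
  ultimately show ?thesis
    by (auto simp: hinv_def hmult_def hdil_def inner_commute algebra_simps inner_diff_right)
qed

lemma hplane_self: "\<xi>0 \<in> hplane \<xi>0"
  by (cases \<xi>0) (simp add: hplane_def)

lemma hplane_ray:
  assumes "\<eta> \<in> hplane \<xi>0"
  shows "\<xi>0 + s *\<^sub>R (\<eta> - \<xi>0) \<in> hplane \<xi>0"
proof -
  obtain a b c a0 b0 c0 where "\<eta> = (a, b, c)" "\<xi>0 = (a0, b0, c0)"
    by (cases \<eta>; cases \<xi>0) auto
  moreover from assms calculation have "c = c0 + 2 * (a \<bullet> b0 - a0 \<bullet> b)"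
    by (simp add: hplane_def)
  ultimately show ?thesis
    by (auto simp: hplane_def inner_commute algebra_simps inner_diff_right inner_diff_left)
qed

lemma Pr1_ray: "Pr1 (\<xi>0 + s *\<^sub>R (\<eta> - \<xi>0)) - Pr1 \<xi>0 = s *\<^sub>R (Pr1 \<eta> - Pr1 \<xi>0)"
  by (simp add: Pr1_def algebra_simps)

lemma Pr1_hplane_eq_iff:
  assumes "\<eta> \<in> hplane \<xi>0"
  shows "Pr1 \<eta> = Pr1 \<xi>0 \<longleftrightarrow> \<eta> = \<xi>0"
  using assms by (cases \<eta>; cases \<xi>0) (auto simp: hplane_def Pr1_def)

lemma slice_lambda_self: "slice_lambda G0 \<xi>0 \<xi>0 = 0"
  by (simp add: slice_lambda_def)

lemma slice_lambda_eq_inverse_exit_time: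
  assumes G: "open G0" "convex G0" "\<xi>0 \<in> G0" and \<eta>: "\<eta> \<in> hplane \<xi>0"
    and \<tau>: "0 < \<tau>" "\<xi>0 + \<tau> *\<^sub>R (\<eta> - \<xi>0) \<in> frontier G0"
  shows "slice_lambda G0 \<xi>0 \<eta> = 1 / \<tau>"
proof -
  have "\<eta> \<noteq> \<xi>0" using \<tau>(2) G by (auto simp: frontier_def interior_open)
  have "bdry_pt G0 \<xi>0 \<eta> = \<xi>0 + \<tau> *\<^sub>R (\<eta> - \<xi>0)"
    unfolding bdry_pt_def hmult_hdil_hplane[OF \<eta>]
  proof (rule the_equality)
    fix e assume "e \<in> frontier G0 \<inter> hplane \<xi>0 \<and> (\<exists>s>0. e = \<xi>0 + s *\<^sub>R (\<eta> - \<xi>0))"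
    then show "e = \<xi>0 + \<tau> *\<^sub>R (\<eta> - \<xi>0)"
      using open_convex_frontier_ray_unique[OF G _ \<tau>(1) _ \<tau>(2)] by blast
  qed (use \<tau> hplane_ray[OF \<eta>] in auto)
  moreover have "Pr1 \<eta> - Pr1 \<xi>0 \<noteq> 0" using Pr1_hplane_eq_iff[OF \<eta>] \<open>\<eta> \<noteq> \<xi>0\<close> by simp
  ultimately show ?thesis
    using \<open>\<eta> \<noteq> \<xi>0\<close> \<tau>(1)
    by (simp add: slice_lambda_def gauge_hinv_hmult_hplane[OF \<eta>]
        gauge_hinv_hmult_hplane[OF hplane_ray[OF \<eta>]] Pr1_ray)
qed

lemma slicing_cone_hplane:
  assumes "\<xi> \<in> hplane \<xi>0" "cv \<noteq> 0"
  shows "slicing_cone G0 \<xi>0 cv cb \<xi> = cv + (cb - cv) * slice_lambda G0 \<xi>0 \<xi>"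
  using assms by (simp add: slicing_cone_def closest_point_self field_simps)

lemma slicing_cone_centre: "slicing_cone G0 \<xi>0 cv cb \<xi>0 = cv"
  by (simp add: slicing_cone_def closest_point_self hplane_self slice_lambda_self)

lemma norm_Pr1_le_diamH:
  assumes "horizontally_bounded \<Omega>" "G0 \<subseteq> \<Omega>" "\<xi>0 \<in> G0" "\<eta> \<in> G0 \<inter> hplane \<xi>0"
  shows "norm (Pr1 \<eta> - Pr1 \<xi>0) \<le> diamH (G0 \<inter> hplane \<xi>0)"
proof -
  obtain B where "\<forall>\<xi>\<in>\<Omega>. \<forall>a\<in>\<Omega> \<inter> hplane \<xi>. \<forall>b\<in>\<Omega> \<inter> hplane \<xi>. dH a b \<le> B"
    using assms(1) by (auto simp: horizontally_bounded_def)
  then have "bdd_above {dH a b | a b. a \<in> G0 \<inter> hplane \<xi>0 \<and> b \<in> G0 \<inter> hplane \<xi>0}"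
    using assms(2,3) unfolding bdd_above_def by blast
  moreover have "dH \<eta> \<xi>0 \<in> {dH a b | a b. a \<in> G0 \<inter> hplane \<xi>0 \<and> b \<in> G0 \<inter> hplane \<xi>0}"
    using assms(3,4) hplane_self by blast
  ultimately show ?thesis
    using assms(4) by (simp add: diamH_def cSup_upper flip: dH_hplane)
qed

locale bounded_horizontal_slice =
  fixes G0 :: "'n::finite heis set" and \<xi>0 :: "'n heis" and D :: real
  assumes open_G0: "open G0" and convex_G0: "convex G0" and centre: "\<xi>0 \<in> G0"
    and slice_bound: "\<And>\<eta>. \<eta> \<in> G0 \<inter> hplane \<xi>0 \<Longrightarrow> norm (Pr1 \<eta> - Pr1 \<xi>0) \<le> D"
begin

lemma ray_exit:
  assumes \<eta>: "\<eta> \<in> hplane \<xi>0" "\<eta> \<noteq> \<xi>0"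
  obtains \<tau> where "0 < \<tau>" "\<And>s. 0 \<le> s \<Longrightarrow> s < \<tau> \<Longrightarrow> \<xi>0 + s *\<^sub>R (\<eta> - \<xi>0) \<in> G0"
    "\<xi>0 + \<tau> *\<^sub>R (\<eta> - \<xi>0) \<in> frontier G0"
proof -
  define n where "n = norm (Pr1 \<eta> - Pr1 \<xi>0)"
  have "0 < n" using Pr1_hplane_eq_iff[OF \<eta>(1)] \<eta>(2) by (simp add: n_def)
  have "\<bar>s\<bar> \<le> D / n" if "\<xi>0 + s *\<^sub>R (\<eta> - \<xi>0) \<in> G0" for s
  proof -
    have "\<bar>s\<bar> * n \<le> D"
      using slice_bound[of "\<xi>0 + s *\<^sub>R (\<eta> - \<xi>0)"] that hplane_ray[OF \<eta>(1)]
      by (simp add: Pr1_ray n_def)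
    then show ?thesis using \<open>0 < n\<close> by (simp add: pos_le_divide_eq)
  qed
  then have "bounded {s. \<xi>0 + s *\<^sub>R (\<eta> - \<xi>0) \<in> G0}"
    unfolding bounded_iff by auto
  then show ?thesis using bounded_ray_exit[OF open_G0 centre] that by blast
qed

lemma slice_lambda_ray:
  assumes \<eta>: "\<eta> \<in> hplane \<xi>0" and "0 < s"
  shows "slice_lambda G0 \<xi>0 (\<xi>0 + s *\<^sub>R (\<eta> - \<xi>0)) = s * slice_lambda G0 \<xi>0 \<eta>"
proof (cases "\<eta> = \<xi>0")
  case False
  then obtain \<tau> where \<tau>: "0 < \<tau>" "\<xi>0 + \<tau> *\<^sub>R (\<eta> - \<xi>0) \<in> frontier G0"
    using ray_exit[OF \<eta>] by metis
  have "\<xi>0 + (\<tau> / s) *\<^sub>R ((\<xi>0 + s *\<^sub>R (\<eta> - \<xi>0)) - \<xi>0) = \<xi>0 + \<tau> *\<^sub>R (\<eta> - \<xi>0)"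
    using \<open>0 < s\<close> by simp
  then have "slice_lambda G0 \<xi>0 (\<xi>0 + s *\<^sub>R (\<eta> - \<xi>0)) = 1 / (\<tau> / s)"
    using \<tau> \<open>0 < s\<close> by (intro slice_lambda_eq_inverse_exit_time[OF open_G0 convex_G0 centre
          hplane_ray[OF \<eta>]]) auto
  moreover have "slice_lambda G0 \<xi>0 \<eta> = 1 / \<tau>"
    using slice_lambda_eq_inverse_exit_time[OF open_G0 convex_G0 centre \<eta> \<tau>] .
  ultimately show ?thesis by simp
qed (simp add: slice_lambda_self)

lemma norm_Pr1_le_slice_lambda:
  assumes \<eta>: "\<eta> \<in> hplane \<xi>0"
  shows "norm (Pr1 \<eta> - Pr1 \<xi>0) \<le> D * slice_lambda G0 \<xi>0 \<eta>"
proof (cases "\<eta> = \<xi>0")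
  case False
  define n where "n = norm (Pr1 \<eta> - Pr1 \<xi>0)"
  have "0 < n" using Pr1_hplane_eq_iff[OF \<eta>] False by (simp add: n_def)
  obtain \<tau> where \<tau>: "0 < \<tau>" "\<And>s. 0 \<le> s \<Longrightarrow> s < \<tau> \<Longrightarrow> \<xi>0 + s *\<^sub>R (\<eta> - \<xi>0) \<in> G0"
    "\<xi>0 + \<tau> *\<^sub>R (\<eta> - \<xi>0) \<in> frontier G0"
    using ray_exit[OF \<eta> False] by metis
  have "\<tau> * n \<le> D"
  proof (rule dense_le_bounded)
    show "0 < \<tau> * n" using \<tau>(1) \<open>0 < n\<close> by simp
  next
    fix w assume w: "0 < w" "w < \<tau> * n"
    have "\<xi>0 + (w / n) *\<^sub>R (\<eta> - \<xi>0) \<in> G0 \<inter> hplane \<xi>0"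
      using \<tau>(2)[of "w / n"] w \<open>0 < n\<close> hplane_ray[OF \<eta>] by (simp add: field_simps)
    from slice_bound[OF this] show "w \<le> D"
      using w \<open>0 < n\<close> by (simp add: Pr1_ray n_def)
  qed
  moreover have "slice_lambda G0 \<xi>0 \<eta> = 1 / \<tau>"
    using slice_lambda_eq_inverse_exit_time[OF open_G0 convex_G0 centre \<eta> \<tau>(1,3)] .
  ultimately show ?thesis
    using \<tau>(1) by (simp add: n_def pos_le_divide_eq mult.commute)
qed (simp add: slice_lambda_self)

lemma ball_subset_horiz_subdiff_slicing_cone:
  assumes "cv < cb" "cv \<noteq> 0"
  shows "ball 0 ((cb - cv) / D) \<subseteq> horiz_subdiff \<Omega> (slicing_cone G0 \<xi>0 cv cb) \<xi>0"
proof
  fix p :: "(real^'n) \<times> (real^'n)"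
  assume p: "p \<in> ball 0 ((cb - cv) / D)"
  have "0 \<le> D" using slice_bound[of \<xi>0] centre hplane_self[of \<xi>0] by simp
  with p have "0 < D" by (cases "D = 0") auto
  then have pD: "norm p * D \<le> cb - cv" using p by (simp add: pos_less_divide_eq)
  show "p \<in> horiz_subdiff \<Omega> (slicing_cone G0 \<xi>0 cv cb) \<xi>0"
    unfolding horiz_subdiff_def
  proof (intro CollectI ballI)
    fix \<xi> assume "\<xi> \<in> \<Omega> \<inter> hplane \<xi>0"
    then have \<xi>: "\<xi> \<in> hplane \<xi>0" by simp
    define lam where "lam = slice_lambda G0 \<xi>0 \<xi>"
    have bound: "norm (Pr1 \<xi> - Pr1 \<xi>0) \<le> D * lam"
      using norm_Pr1_le_slice_lambda[OF \<xi>] by (simp add: lam_def)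
    then have "0 \<le> lam"
      using order_trans[OF norm_ge_zero bound] \<open>0 < D\<close> by (simp add: zero_le_mult_iff)
    have "p \<bullet> (Pr1 \<xi> - Pr1 \<xi>0) \<le> norm p * norm (Pr1 \<xi> - Pr1 \<xi>0)"
      by (rule norm_cauchy_schwarz)
    also have "\<dots> \<le> norm p * D * lam"
      using bound by (simp add: mult_left_mono mult.assoc)
    also have "\<dots> \<le> (cb - cv) * lam"
      using pD \<open>0 \<le> lam\<close> by (rule mult_right_mono)
    finally show "slicing_cone G0 \<xi>0 cv cb \<xi>0 + p \<bullet> (Pr1 \<xi> - Pr1 \<xi>0)
        \<le> slicing_cone G0 \<xi>0 cv cb \<xi>"
      using slicing_cone_hplane[OF \<xi> assms(2)] by (simp add: slicing_cone_centre lam_def)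
  qed
qed

lemma slicing_cone_gt_of_interior_horiz_subdiff:
  assumes "G0 \<subseteq> \<Omega>" "cv \<noteq> 0"
    and p: "p \<in> interior (horiz_subdiff \<Omega> (slicing_cone G0 \<xi>0 cv cb) \<xi>0)"
    and \<xi>: "\<xi> \<in> hplane \<xi>0" "\<xi> \<noteq> \<xi>0"
  shows "slicing_cone G0 \<xi>0 cv cb \<xi>0 + p \<bullet> (Pr1 \<xi> - Pr1 \<xi>0) < slicing_cone G0 \<xi>0 cv cb \<xi>"
proof -
  define V where "V = slicing_cone G0 \<xi>0 cv cb"
  define lam where "lam = slice_lambda G0 \<xi>0 \<xi>"
  define w where "w = Pr1 \<xi> - Pr1 \<xi>0"
  have "w \<noteq> 0" using Pr1_hplane_eq_iff[OF \<xi>(1)] \<xi>(2) by (simp add: w_def)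
  obtain e where e: "0 < e" "ball p e \<subseteq> horiz_subdiff \<Omega> V \<xi>0"
    using p by (auto simp: V_def mem_interior)
  define q where "q = p + (e / 2 / norm w) *\<^sub>R w"
  have "q \<in> horiz_subdiff \<Omega> V \<xi>0"
    using e \<open>w \<noteq> 0\<close> by (auto simp: q_def dist_norm intro!: subsetD[OF e(2)])
  obtain \<tau> where \<tau>: "0 < \<tau>" "\<And>s. 0 \<le> s \<Longrightarrow> s < \<tau> \<Longrightarrow> \<xi>0 + s *\<^sub>R (\<xi> - \<xi>0) \<in> G0"
    using ray_exit[OF \<xi>] by metis
  define s where "s = \<tau> / 2"
  have s: "0 < s" "\<xi>0 + s *\<^sub>R (\<xi> - \<xi>0) \<in> G0" using \<tau> by (auto simp: s_def)
  define \<zeta> where "\<zeta> = \<xi>0 + s *\<^sub>R (\<xi> - \<xi>0)"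
  have \<zeta>: "\<zeta> \<in> \<Omega> \<inter> hplane \<xi>0" using s assms(1) hplane_ray[OF \<xi>(1)] by (auto simp: \<zeta>_def)
  have "V \<xi>0 + q \<bullet> (Pr1 \<zeta> - Pr1 \<xi>0) \<le> V \<zeta>"
    using \<open>q \<in> horiz_subdiff \<Omega> V \<xi>0\<close> \<zeta> by (auto simp: horiz_subdiff_def)
  moreover have "V \<zeta> = cv + s * ((cb - cv) * lam)"
    using slicing_cone_hplane[OF hplane_ray[OF \<xi>(1)] assms(2)] slice_lambda_ray[OF \<xi>(1) s(1)]
    by (simp add: V_def \<zeta>_def lam_def)
  moreover have "Pr1 \<zeta> - Pr1 \<xi>0 = s *\<^sub>R w" by (simp add: \<zeta>_def w_def Pr1_ray)
  ultimately have "s * (q \<bullet> w) \<le> s * ((cb - cv) * lam)"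
    by (simp add: V_def slicing_cone_centre)
  then have "q \<bullet> w \<le> (cb - cv) * lam" using s(1) by simp
  moreover have "q \<bullet> w = p \<bullet> w + e / 2 * norm w"
    using \<open>w \<noteq> 0\<close> by (simp add: q_def inner_add_left dot_square_norm power2_eq_square)
  moreover have "0 < e / 2 * norm w" using e(1) \<open>w \<noteq> 0\<close> by simp
  ultimately show ?thesis
    using slicing_cone_hplane[OF \<xi>(1) assms(2)] by (simp add: slicing_cone_centre w_def lam_def)
qed

end

theorem proposition3p3:
  fixes \<Omega> G0 :: "'n::finite heis set" and \<xi>0 :: "'n heis" and cv cb :: real
  assumes "open \<Omega>" and "horizontally_bounded \<Omega>"
    and "open G0" and "convex G0" and "G0 \<subseteq> \<Omega>" and "\<xi>0 \<in> G0"
    and "cv < cb" and "cb \<le> 0"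
  shows "(ball 0 ((cb - cv) / diamH (G0 \<inter> hplane \<xi>0))
           \<subseteq> horiz_subdiff \<Omega> (slicing_cone G0 \<xi>0 cv cb) \<xi>0)
       \<and> (\<forall>p \<in> interior (horiz_subdiff \<Omega> (slicing_cone G0 \<xi>0 cv cb) \<xi>0).
           \<forall>\<xi> \<in> (closure G0 \<inter> hplane \<xi>0) - {\<xi>0}.
             slicing_cone G0 \<xi>0 cv cb \<xi> >
               slicing_cone G0 \<xi>0 cv cb \<xi>0 + p \<bullet> (Pr1 \<xi> - Pr1 \<xi>0))"
proof -
  interpret bounded_horizontal_slice G0 \<xi>0 "diamH (G0 \<inter> hplane \<xi>0)"
    by unfold_locales (use assms(3,4,6) norm_Pr1_le_diamH[OF assms(2,5,6)] in auto)
  have "cv \<noteq> 0" using assms(7,8) by linarith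
  then show ?thesis
    using ball_subset_horiz_subdiff_slicing_cone[OF assms(7)]
      slicing_cone_gt_of_interior_horiz_subdiff[OF assms(5)] by blast
qed

end
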